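(* Assume Hypotheses 1 and 2 (see context). For any $x_1,x_2\in U$ and $t_0>0$, if $x_2\in\mathcal{C}(x_1)$, $\Phi([0,t_0],x_1)\subset U$ and $\Phi([0,t_0],x_2)\subset U$, then $\Phi(t,x_2)\in\mathcal{C}(\Phi(t,x_1))$ for all $t\in[0,t_0]$.
   Context: System $\dot a=f(a,z)$, $\dot z=g(a,z)$, $(a,z)\in\mathbb{R}^n\times\mathbb{R}^m$, $x=(a,z)$, $X=\mathbb{R}^n\times\mathbb{R}^m$, with flow $\Phi(t,x)$; Euclidean inner product, norm, operator norm. $\mathcal{L}(x_1,x_2)=\|a_2-a_1\|^2-\|z_2-z_1\|^2$ for $x_i=(a_i,z_i)$; $\mathcal{C}(x)=\{x'\in X:\mathcal{L}(x',x)\ge0\}$; $\mathbb{B}_d(x)=\{(a',z'):\|a'-a\|\le d,\|z'-z\|\le d\}$. Hypothesis 1: $U$ is open and convex in $\mathbb{R}^n\times\mathbb{R}^m$, and there is $d>0$ with $\mathcal{C}(x)\cap U\subset\mathbb{B}_d(x)$ for all $x\in U$. Hypothesis 2: $f,g$ are $C^1$ on $U$; there exist a continuous positive $\alpha:U\to\mathbb{R}$, a continuous nonnegative $\ell:U\to\mathbb{R}$ and $c_1>0$ with, for all $x\in U$: $\langle a',D_af(x)a'\rangle\ge\alpha(x)\|a'\|^2$ for all $a'$; $\langle z',D_zg(x)z'\rangle\le\ell(x)\|z'\|^2$ for all $z'$; $\alpha(x)\ge\ell(x)+\|D_zf(x)\|+\|D_ag(x)\|+c_1$. *)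

theory Defs
  imports "HOL-Analysis.Analysis"
begin

text \<open>Points x = (a,z) of X = R^n x R^m are pairs; 'a plays R^n, 'b plays R^m.\<close>

definition LL :: "('a::real_normed_vector \<times> 'b::real_normed_vector) \<Rightarrow> ('a \<times> 'b) \<Rightarrow> real" where
  "LL x1 x2 = (norm (fst x2 - fst x1))\<^sup>2 - (norm (snd x2 - snd x1))\<^sup>2"

definition cone :: "('a::real_normed_vector \<times> 'b::real_normed_vector) \<Rightarrow> ('a \<times> 'b) set" where
  "cone x = {x'. LL x' x \<ge> 0}"

definition box_nbhd :: "real \<Rightarrow> ('a::real_normed_vector \<times> 'b::real_normed_vector) \<Rightarrow> ('a \<times> 'b) set" where
  "box_nbhd d x = {x'. norm (fst x' - fst x) \<le> d \<and> norm (snd x' - snd x) \<le> d}"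

definition is_trajectory ::
  "('a::real_normed_vector \<times> 'b::real_normed_vector \<Rightarrow> 'a) \<Rightarrow> ('a \<times> 'b \<Rightarrow> 'b) \<Rightarrow> real \<Rightarrow> ('a \<times> 'b) \<Rightarrow> (real \<Rightarrow> 'a \<times> 'b) \<Rightarrow> bool" where
  "is_trajectory f g t0 x0 \<phi> \<longleftrightarrow> \<phi> 0 = x0 \<and>
     (\<forall>t\<in>{0..t0}. (\<phi> has_vector_derivative (f (\<phi> t), g (\<phi> t))) (at t within {0..t0}))"

end

theory Submission
  imports Defs
begin

(* For two trajectories phi1, phi2 put  L(t) = |a2 - a1|^2 - |z2 - z1|^2, so that
   phi2 t lies in the cone of phi1 t iff L(t) >= 0, and
       L'(t) = 2 (<a2 - a1, f phi2 - f phi1> - <z2 - z1, g phi2 - g phi1>).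
   By the mean value theorem on the segment [phi1 t, phi2 t] (inside the convex set U) the
   bracket equals  <A, Df y (A,Z)> - <Z, Dg y (A,Z)>  for some y on that segment, where
   (A,Z) = phi2 t - phi1 t.  Splitting (A,Z) = (A,0) + (0,Z) and using Hypothesis 2, this is
   at least  M (|A|^2 - |Z|^2)  whenever |A| <= |Z|, for any M >= alpha y.  Since all these
   segments form a compact subset of U, alpha has a uniform upper bound M on them.
   Hence L' >= 2 M L wherever L <= 0, and a Gronwall-type barrier argument applied to
   exp(-2 M t) L(t) shows that L, being nonnegative at 0, stays nonnegative on [0, t0]. *)

lemma bounded_linear_blinfun_on_snd:
  "bounded_linear (\<lambda>z'. blinfun_apply (B::('a::real_normed_vector \<times> 'b::real_normed_vector) \<Rightarrow>\<^sub>L 'c::real_normed_vector) (0, z'))"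
  by (intro bounded_linear_compose[OF blinfun.bounded_linear_right] bounded_linear_Pair
      bounded_linear_zero bounded_linear_ident)

lemma bounded_linear_blinfun_on_fst:
  "bounded_linear (\<lambda>a'. blinfun_apply (B::('a::real_normed_vector \<times> 'b::real_normed_vector) \<Rightarrow>\<^sub>L 'c::real_normed_vector) (a', 0))"
  by (intro bounded_linear_compose[OF blinfun.bounded_linear_right] bounded_linear_Pair
      bounded_linear_zero bounded_linear_ident)

lemma quadratic_gap_estimate:
  fixes al l bf bg M a z :: real
  assumes "0 \<le> a" "a \<le> z" "al \<le> M" "l + bf + bg \<le> al" "bf \<ge> 0" "bg \<ge> 0"
  shows "M * (a\<^sup>2 - z\<^sup>2) \<le> al * a\<^sup>2 - bf * a * z - bg * a * z - l * z\<^sup>2"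
proof -
  have expand: "al * a\<^sup>2 - bf * a * z - bg * a * z - l * z\<^sup>2 - M * (a\<^sup>2 - z\<^sup>2)
     = (M - al) * (z\<^sup>2 - a\<^sup>2) + (al - l - bf - bg) * z\<^sup>2 + (bf + bg) * z * (z - a)"
    by (simp add: algebra_simps power2_eq_square)
  have "a\<^sup>2 \<le> z\<^sup>2" using assms by (simp add: power_mono)
  then have "0 \<le> (M - al) * (z\<^sup>2 - a\<^sup>2)" using assms by simp
  moreover have "0 \<le> (al - l - bf - bg) * z\<^sup>2" using assms by simp
  moreover have "0 \<le> (bf + bg) * z * (z - a)" using assms by simp
  ultimately show ?thesis using expand by linarith
qed

lemma linearised_cone_estimate:
  fixes DF :: "('a::real_inner \<times> 'b::real_inner) \<Rightarrow>\<^sub>L 'a"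
    and DG :: "('a \<times> 'b) \<Rightarrow>\<^sub>L 'b"
  assumes H_a: "\<forall>a'. inner a' (DF (a', 0)) \<ge> al * (norm a')\<^sup>2"
    and H_z: "\<forall>z'. inner z' (DG (0, z')) \<le> l * (norm z')\<^sup>2"
    and gap: "al \<ge> l + onorm (\<lambda>z'. DF (0, z')) + onorm (\<lambda>a'. DG (a', 0))"
    and al_le: "al \<le> M"
    and A_le_Z: "norm A \<le> norm Z"
  shows "M * ((norm A)\<^sup>2 - (norm Z)\<^sup>2) \<le> inner A (DF (A, Z)) - inner Z (DG (A, Z))"
proof -
  define bf where "bf = onorm (\<lambda>z'. DF (0, z'))"
  define bg where "bg = onorm (\<lambda>a'. DG (a', 0))"
  have "\<bar>inner A (DF (0, Z))\<bar> \<le> norm A * norm (DF (0, Z))" by (rule Cauchy_Schwarz_ineq2)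
  also have "\<dots> \<le> norm A * (bf * norm Z)"
    unfolding bf_def using onorm[OF bounded_linear_blinfun_on_snd, of DF Z]
    by (simp add: mult_left_mono)
  finally have cross_f: "- (bf * norm A * norm Z) \<le> inner A (DF (0, Z))" by (simp add: algebra_simps)
  have "\<bar>inner Z (DG (A, 0))\<bar> \<le> norm Z * norm (DG (A, 0))" by (rule Cauchy_Schwarz_ineq2)
  also have "\<dots> \<le> norm Z * (bg * norm A)"
    unfolding bg_def using onorm[OF bounded_linear_blinfun_on_fst, of DG A]
    by (simp add: mult_left_mono)
  finally have cross_g: "inner Z (DG (A, 0)) \<le> bg * norm A * norm Z" by (simp add: algebra_simps)
  have decompose: "inner A (DF (A, Z)) - inner Z (DG (A, Z))
      = inner A (DF (A, 0)) + inner A (DF (0, Z)) - inner Z (DG (A, 0)) - inner Z (DG (0, Z))"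
    using blinfun.add_right[of DF "(A, 0)" "(0, Z)"] blinfun.add_right[of DG "(A, 0)" "(0, Z)"]
    by (simp add: inner_add_right)
  have "M * ((norm A)\<^sup>2 - (norm Z)\<^sup>2)
      \<le> al * (norm A)\<^sup>2 - bf * norm A * norm Z - bg * norm A * norm Z - l * (norm Z)\<^sup>2"
    using quadratic_gap_estimate[of "norm A" "norm Z" al M l bf bg]
      onorm_pos_le[OF bounded_linear_blinfun_on_snd, of DF]
      onorm_pos_le[OF bounded_linear_blinfun_on_fst, of DG]
      A_le_Z al_le gap
    unfolding bf_def bg_def by simp
  then show ?thesis using decompose cross_f cross_g H_a[rule_format, of A] H_z[rule_format, of Z]
    by linarith
qed

lemma mean_value_on_segment:
  fixes \<phi> :: "'a::real_normed_vector \<Rightarrow> real"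
  assumes "convex U" "p1 \<in> U" "p2 \<in> U"
    and deriv: "\<forall>x\<in>U. (\<phi> has_derivative D x) (at x)"
  shows "\<exists>s\<in>{0<..<1}. \<phi> p2 - \<phi> p1 = D (p1 + s *\<^sub>R (p2 - p1)) (p2 - p1)"
proof -
  define \<gamma> where "\<gamma> = (\<lambda>s::real. p1 + s *\<^sub>R (p2 - p1))"
  have \<gamma>_in_U: "\<gamma> s \<in> U" if "s \<in> {0..1}" for s
  proof -
    have "\<gamma> s = (1 - s) *\<^sub>R p1 + s *\<^sub>R p2" unfolding \<gamma>_def by (simp add: algebra_simps)
    then show ?thesis using convexD[OF assms(1-3), of "1 - s" s] that by simp
  qed
  have "((\<lambda>s. \<phi> (\<gamma> s)) has_derivative (\<lambda>k. D (\<gamma> s) (k *\<^sub>R (p2 - p1)))) (at s within {0..1})"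
    if "s \<in> {0..1}" for s
  proof -
    have "(\<gamma> has_derivative (\<lambda>k. k *\<^sub>R (p2 - p1))) (at s within {0..1})"
      unfolding \<gamma>_def by (auto intro!: derivative_eq_intros)
    from has_derivative_in_compose[OF this, of \<phi> "D (\<gamma> s)"] show ?thesis
      using deriv \<gamma>_in_U[OF that] by (auto intro: has_derivative_at_withinI)
  qed
  from mvt_simple[of 0 1 "\<lambda>s. \<phi> (\<gamma> s)", OF _ this] obtain s where "s \<in> {0<..<1}"
    and "\<phi> (\<gamma> 1) - \<phi> (\<gamma> 0) = D (\<gamma> s) ((1 - 0) *\<^sub>R (p2 - p1))"
    by auto
  then show ?thesis unfolding \<gamma>_def by auto
qed

lemma cone_derivative_estimate:
  fixes f :: "'a::real_inner \<times> 'b::real_inner \<Rightarrow> 'a"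
    and g :: "'a \<times> 'b \<Rightarrow> 'b"
    and Df :: "'a \<times> 'b \<Rightarrow> ('a \<times> 'b) \<Rightarrow>\<^sub>L 'a"
    and Dg :: "'a \<times> 'b \<Rightarrow> ('a \<times> 'b) \<Rightarrow>\<^sub>L 'b"
  assumes U_convex: "convex U"
    and f_deriv: "\<forall>x\<in>U. (f has_derivative blinfun_apply (Df x)) (at x)"
    and g_deriv: "\<forall>x\<in>U. (g has_derivative blinfun_apply (Dg x)) (at x)"
    and H_a: "\<forall>x\<in>U. \<forall>a'. inner a' (Df x (a', 0)) \<ge> alpha x * (norm a')\<^sup>2"
    and H_z: "\<forall>x\<in>U. \<forall>z'. inner z' (Dg x (0, z')) \<le> ell x * (norm z')\<^sup>2"
    and gap: "\<forall>x\<in>U. alpha x \<ge> ell x + onorm (\<lambda>z'. Df x (0, z')) + onorm (\<lambda>a'. Dg x (a', 0))"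
    and p1: "p1 \<in> U" and p2: "p2 \<in> U"
    and alpha_bound: "\<forall>s\<in>{0..1}. alpha (p1 + s *\<^sub>R (p2 - p1)) \<le> M"
    and A_le_Z: "(norm (fst (p2 - p1)))\<^sup>2 \<le> (norm (snd (p2 - p1)))\<^sup>2"
  shows "M * ((norm (fst (p2 - p1)))\<^sup>2 - (norm (snd (p2 - p1)))\<^sup>2)
     \<le> inner (fst (p2 - p1)) (f p2 - f p1) - inner (snd (p2 - p1)) (g p2 - g p1)"
proof -
  define A where "A = fst (p2 - p1)"
  define Z where "Z = snd (p2 - p1)"
  have "\<forall>x\<in>U. ((\<lambda>x. inner A (f x) - inner Z (g x)) has_derivative
      (\<lambda>v. inner A (Df x v) - inner Z (Dg x v))) (at x)"
    using f_deriv g_deriv by (auto intro!: has_derivative_diff has_derivative_inner_right)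
  from mean_value_on_segment[OF U_convex p1 p2 this] obtain s where s: "s \<in> {0<..<1}"
    and mv: "inner A (f p2) - inner Z (g p2) - (inner A (f p1) - inner Z (g p1))
      = inner A (Df (p1 + s *\<^sub>R (p2 - p1)) (p2 - p1)) - inner Z (Dg (p1 + s *\<^sub>R (p2 - p1)) (p2 - p1))"
    by blast
  define y where "y = p1 + s *\<^sub>R (p2 - p1)"
  have y_U: "y \<in> U"
    using convexD[OF U_convex p1 p2, of "1 - s" s] s
    unfolding y_def by (simp add: algebra_simps)
  have "M * ((norm A)\<^sup>2 - (norm Z)\<^sup>2) \<le> inner A (Df y (A, Z)) - inner Z (Dg y (A, Z))"
    by (rule linearised_cone_estimate[where l = "ell y" and al = "alpha y"])
      (use H_a H_z gap y_U alpha_bound s power2_le_imp_le[OF A_le_Z] in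
        \<open>auto simp: y_def A_def Z_def\<close>)
  moreover have "p2 - p1 = (A, Z)" unfolding A_def Z_def by (simp add: prod_eq_iff)
  ultimately show ?thesis
    using mv unfolding y_def[symmetric] A_def[symmetric] Z_def[symmetric]
    by (simp add: inner_diff_right)
qed

lemma has_derivative_norm_difference:
  fixes x :: "real \<Rightarrow> 'a::real_inner \<times> 'b::real_inner"
  assumes "(x has_vector_derivative v) (at t within S)"
  shows "((\<lambda>t. (norm (fst (x t)))\<^sup>2 - (norm (snd (x t)))\<^sup>2) has_real_derivative
           2 * (inner (fst (x t)) (fst v) - inner (snd (x t)) (snd v))) (at t within S)"
proof -
  have d: "(x has_derivative (\<lambda>h. h *\<^sub>R v)) (at t within S)"
    using assms by (simp add: has_vector_derivative_def)
  have d1: "((\<lambda>t. fst (x t)) has_derivative (\<lambda>h. h *\<^sub>R fst v)) (at t within S)"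
    using has_derivative_fst[OF d] by simp
  have d2: "((\<lambda>t. snd (x t)) has_derivative (\<lambda>h. h *\<^sub>R snd v)) (at t within S)"
    using has_derivative_snd[OF d] by simp
  have "((\<lambda>t. inner (fst (x t)) (fst (x t)) - inner (snd (x t)) (snd (x t))) has_derivative
     (\<lambda>h. inner (fst (x t)) (h *\<^sub>R fst v) + inner (h *\<^sub>R fst v) (fst (x t))
        - (inner (snd (x t)) (h *\<^sub>R snd v) + inner (h *\<^sub>R snd v) (snd (x t))))) (at t within S)"
    by (intro has_derivative_diff has_derivative_inner d1 d2)
  moreover have "(\<lambda>h. inner (fst (x t)) (h *\<^sub>R fst v) + inner (h *\<^sub>R fst v) (fst (x t))
        - (inner (snd (x t)) (h *\<^sub>R snd v) + inner (h *\<^sub>R snd v) (snd (x t))))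
     = (*) (2 * (inner (fst (x t)) (fst v) - inner (snd (x t)) (snd v)))"
    by (auto simp: algebra_simps inner_commute fun_eq_iff)
  ultimately show ?thesis
    unfolding has_field_derivative_def power2_norm_eq_inner by simp
qed

lemma trajectory_gap_derivative:
  fixes f :: "'a::real_inner \<times> 'b::real_inner \<Rightarrow> 'a" and g :: "'a \<times> 'b \<Rightarrow> 'b"
  assumes "is_trajectory f g t0 x1 phi1" "is_trajectory f g t0 x2 phi2" "t \<in> {0..t0}"
  shows "((\<lambda>t. (norm (fst (phi2 t - phi1 t)))\<^sup>2 - (norm (snd (phi2 t - phi1 t)))\<^sup>2)
      has_real_derivative 2 * (inner (fst (phi2 t - phi1 t)) (f (phi2 t) - f (phi1 t))
                          - inner (snd (phi2 t - phi1 t)) (g (phi2 t) - g (phi1 t))))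
      (at t within {0..t0})"
proof -
  have "((\<lambda>t. phi2 t - phi1 t) has_vector_derivative
      (f (phi2 t), g (phi2 t)) - (f (phi1 t), g (phi1 t))) (at t within {0..t0})"
    using assms unfolding is_trajectory_def by (intro has_vector_derivative_diff) auto
  from has_derivative_norm_difference[OF this] show ?thesis by simp
qed

lemma nonneg_barrier:
  fixes N Nd :: "real \<Rightarrow> real"
  assumes deriv: "\<And>t. t \<in> {0..t0} \<Longrightarrow> (N has_real_derivative Nd t) (at t within {0..t0})"
    and start: "N 0 \<ge> 0"
    and slope: "\<And>t. t \<in> {0..t0} \<Longrightarrow> N t < 0 \<Longrightarrow> Nd t \<ge> 0"
    and t1: "t1 \<in> {0..t0}"
  shows "N t1 \<ge> 0"
proof (rule ccontr)
  assume "\<not> N t1 \<ge> 0"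
  then have N_t1: "N t1 < 0" by simp
  have "continuous_on {0..t0} N"
    unfolding continuous_on_eq_continuous_within using deriv DERIV_continuous by blast
  then have N_cont: "continuous_on {0..t1} N" by (rule continuous_on_subset) (use t1 in auto)
  (* s is the last time in [0,t1] where N is still nonnegative. *)
  define T where "T = {s \<in> {0..t1}. 0 \<le> N s}"
  have "closed T"
    unfolding T_def using continuous_on_closed_Collect_le[OF continuous_on_const N_cont] by simp
  moreover have "0 \<in> T" unfolding T_def using t1 start by simp
  moreover have bdd: "bdd_above T" unfolding T_def by (auto intro: bdd_aboveI[of _ t1])
  ultimately have "Sup T \<in> T" by (intro closed_contains_Sup) auto
  define s where "s = Sup T"
  have s: "0 \<le> s" "s \<le> t1" "N s \<ge> 0" using \<open>Sup T \<in> T\<close> unfolding T_def s_def by auto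
  with N_t1 have s_lt: "s < t1" by (cases "s = t1") auto
  have neg_after: "N u < 0" if "u \<in> {s<..t1}" for u
  proof (rule ccontr)
    assume "\<not> N u < 0"
    then have "u \<in> T" unfolding T_def using that s by auto
    then have "u \<le> s" unfolding s_def by (rule cSup_upper[OF _ bdd])
    then show False using that by simp
  qed
  have "(N has_derivative (*) (Nd u)) (at u within {s..t1})" if "s \<le> u" "u \<le> t1" for u
    using deriv[of u] that s t1
    by (auto simp: has_field_derivative_def intro: has_derivative_subset)
  from mvt_simple[OF s_lt this] obtain \<xi> where \<xi>: "\<xi> \<in> {s<..<t1}"
    and mv: "N t1 - N s = Nd \<xi> * (t1 - s)"
    by auto
  have "Nd \<xi> \<ge> 0" using slope neg_after \<xi> s t1 by auto
  then have "0 \<le> Nd \<xi> * (t1 - s)" using s_lt by simp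
  then have "N t1 \<ge> N s" using mv by linarith
  then show False using N_t1 s by simp
qed

(* Linear form of the barrier principle, via the integrating factor exp(-c t):
  if L(0) \<ge> 0 and L' \<ge> c L wherever L \<le> 0, then L \<ge> 0 on [0,t0]. *)

lemma linear_barrier:
  fixes L Ld :: "real \<Rightarrow> real"
  assumes deriv: "\<And>t. t \<in> {0..t0} \<Longrightarrow> (L has_real_derivative Ld t) (at t within {0..t0})"
    and start: "L 0 \<ge> 0"
    and slope: "\<And>t. t \<in> {0..t0} \<Longrightarrow> L t \<le> 0 \<Longrightarrow> Ld t \<ge> c * L t"
    and t1: "t1 \<in> {0..t0}"
  shows "L t1 \<ge> 0"
proof -
  define E where "E = (\<lambda>t. exp (- c * t))"
  have E_pos: "E t > 0" for t unfolding E_def by simp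
  have "0 \<le> E t1 * L t1"
  proof (rule nonneg_barrier[where N = "\<lambda>t. E t * L t" and Nd = "\<lambda>t. E t * (Ld t - c * L t)"])
    show "((\<lambda>t. E t * L t) has_real_derivative E t * (Ld t - c * L t)) (at t within {0..t0})"
      if "t \<in> {0..t0}" for t
      using deriv[OF that] unfolding E_def
      by (auto intro!: derivative_eq_intros simp: algebra_simps)
    show "0 \<le> E t * (Ld t - c * L t)" if "t \<in> {0..t0}" "E t * L t < 0" for t
      using slope[of t] that E_pos[of t] by (simp add: zero_less_mult_iff mult_less_0_iff)
  qed (use start t1 in \<open>simp_all add: E_def\<close>)
  then show ?thesis using E_pos[of t1] by (simp add: zero_le_mult_iff)
qed

lemma bounded_above_on_segments:
  fixes phi1 phi2 :: "real \<Rightarrow> 'a::real_normed_vector" and alpha :: "'a \<Rightarrow> real"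
  assumes "convex U" "continuous_on U alpha"
    and "continuous_on {0..t0} phi1" "continuous_on {0..t0} phi2"
    and "phi1 ` {0..t0} \<subseteq> U" "phi2 ` {0..t0} \<subseteq> U"
  shows "\<exists>M. \<forall>t\<in>{0..t0}. \<forall>s\<in>{0..1}. alpha (phi1 t + s *\<^sub>R (phi2 t - phi1 t)) \<le> M"
proof -
  define seg where "seg = (\<lambda>p. phi1 (fst p) + snd p *\<^sub>R (phi2 (fst p) - phi1 (fst p)))"
  define S where "S = seg ` ({0..t0} \<times> {0..1::real})"
  have "continuous_on ({0..t0} \<times> {0..1::real}) seg"
    unfolding seg_def using assms(3,4)
    by (intro continuous_intros continuous_on_compose2[OF _ continuous_on_fst]) auto
  then have "compact S" unfolding S_def by (intro compact_continuous_image compact_Times compact_Icc)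
  have "S \<subseteq> U"
  proof
    fix y assume "y \<in> S"
    then obtain t s where ts: "t \<in> {0..t0}" "s \<in> {0..1::real}"
      and "y = (1 - s) *\<^sub>R phi1 t + s *\<^sub>R phi2 t"
      unfolding S_def seg_def by (auto simp: algebra_simps)
    moreover have "phi1 t \<in> U" "phi2 t \<in> U" using ts assms(5,6) by auto
    ultimately show "y \<in> U" using convexD[OF assms(1), of "phi1 t" "phi2 t" "1 - s" s] ts by simp
  qed
  then have "compact (alpha ` S)"
    using \<open>compact S\<close> by (intro compact_continuous_image continuous_on_subset[OF assms(2)])
  then obtain M where M: "\<forall>y\<in>alpha ` S. norm y \<le> M"
    using compact_imp_bounded bounded_iff by metis
  show ?thesis
  proof (intro exI ballI)
    fix t s :: real assume "t \<in> {0..t0}" "s \<in> {0..1}"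
    then have "seg (t, s) \<in> S" unfolding S_def by blast
    then have "\<bar>alpha (seg (t, s))\<bar> \<le> M" using M by auto
    then show "alpha (phi1 t + s *\<^sub>R (phi2 t - phi1 t)) \<le> M" unfolding seg_def by simp
  qed
qed

lemma trajectory_continuous:
  assumes "is_trajectory f g t0 x0 \<phi>"
  shows "continuous_on {0..t0} \<phi>"
  using assms unfolding is_trajectory_def
  by (auto simp: continuous_on_eq_continuous_within intro: has_vector_derivative_continuous)

theorem lemma2p1:
  fixes f :: "'a::euclidean_space \<times> 'b::euclidean_space \<Rightarrow> 'a"
    and g :: "'a \<times> 'b \<Rightarrow> 'b"
    and Df :: "'a \<times> 'b \<Rightarrow> ('a \<times> 'b) \<Rightarrow>\<^sub>L 'a"
    and Dg :: "'a \<times> 'b \<Rightarrow> ('a \<times> 'b) \<Rightarrow>\<^sub>L 'b"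
    and U :: "('a \<times> 'b) set"
    and alpha ell :: "'a \<times> 'b \<Rightarrow> real"
    and c1 d t0 :: real
    and x1 x2 :: "'a \<times> 'b"
    and phi1 phi2 :: "real \<Rightarrow> 'a \<times> 'b"
  assumes U_open: "open U" and U_convex: "convex U"
    and d_pos: "d > 0"
    and cone_box: "\<forall>x\<in>U. cone x \<inter> U \<subseteq> box_nbhd d x"
    and f_deriv: "\<forall>x\<in>U. (f has_derivative blinfun_apply (Df x)) (at x)"
    and g_deriv: "\<forall>x\<in>U. (g has_derivative blinfun_apply (Dg x)) (at x)"
    and Df_cont: "continuous_on U Df" and Dg_cont: "continuous_on U Dg"
    and alpha_cont: "continuous_on U alpha" and ell_cont: "continuous_on U ell"
    and alpha_pos: "\<forall>x\<in>U. alpha x > 0" and ell_nonneg: "\<forall>x\<in>U. ell x \<ge> 0"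
    and c1_pos: "c1 > 0"
    and H_a: "\<forall>x\<in>U. \<forall>a'. inner a' (Df x (a', 0)) \<ge> alpha x * (norm a')\<^sup>2"
    and H_z: "\<forall>x\<in>U. \<forall>z'. inner z' (Dg x (0, z')) \<le> ell x * (norm z')\<^sup>2"
    and H_gap: "\<forall>x\<in>U. alpha x \<ge> ell x + onorm (\<lambda>z'. Df x (0, z')) + onorm (\<lambda>a'. Dg x (a', 0)) + c1"
    and x1_U: "x1 \<in> U" and x2_U: "x2 \<in> U"
    and t0_pos: "t0 > 0"
    and x2_cone: "x2 \<in> cone x1"
    and traj1: "is_trajectory f g t0 x1 phi1" and traj2: "is_trajectory f g t0 x2 phi2"
    and in_U1: "phi1 ` {0..t0} \<subseteq> U" and in_U2: "phi2 ` {0..t0} \<subseteq> U"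
  shows "\<forall>t\<in>{0..t0}. phi2 t \<in> cone (phi1 t)"
proof
  obtain M where M: "\<forall>t\<in>{0..t0}. \<forall>s\<in>{0..1}. alpha (phi1 t + s *\<^sub>R (phi2 t - phi1 t)) \<le> M"
    using bounded_above_on_segments[OF U_convex alpha_cont trajectory_continuous[OF traj1]
        trajectory_continuous[OF traj2] in_U1 in_U2] by blast
  define L where "L = (\<lambda>t. (norm (fst (phi2 t - phi1 t)))\<^sup>2 - (norm (snd (phi2 t - phi1 t)))\<^sup>2)"
  define Ld where "Ld = (\<lambda>t. 2 * (inner (fst (phi2 t - phi1 t)) (f (phi2 t) - f (phi1 t))
                          - inner (snd (phi2 t - phi1 t)) (g (phi2 t) - g (phi1 t))))"
  have L_deriv: "(L has_real_derivative Ld t) (at t within {0..t0})" if "t \<in> {0..t0}" for t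
    using trajectory_gap_derivative[OF traj1 traj2 that] unfolding L_def Ld_def .
  have gap: "\<forall>x\<in>U. alpha x \<ge> ell x + onorm (\<lambda>z'. Df x (0, z')) + onorm (\<lambda>a'. Dg x (a', 0))"
    using H_gap c1_pos by fastforce
  have L_slope: "Ld t \<ge> 2 * M * L t" if t: "t \<in> {0..t0}" and "L t \<le> 0" for t
  proof -
    have "phi1 t \<in> U" "phi2 t \<in> U" using in_U1 in_U2 t by blast+
    moreover have "\<forall>s\<in>{0..1}. alpha (phi1 t + s *\<^sub>R (phi2 t - phi1 t)) \<le> M" using M t by blast
    moreover have "(norm (fst (phi2 t - phi1 t)))\<^sup>2 \<le> (norm (snd (phi2 t - phi1 t)))\<^sup>2"
      using \<open>L t \<le> 0\<close> unfolding L_def by linarith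
    ultimately have "M * L t \<le> inner (fst (phi2 t - phi1 t)) (f (phi2 t) - f (phi1 t))
        - inner (snd (phi2 t - phi1 t)) (g (phi2 t) - g (phi1 t))"
      unfolding L_def
      by (rule cone_derivative_estimate[OF U_convex f_deriv g_deriv H_a H_z gap])
    then show ?thesis unfolding Ld_def by simp
  qed
  have L_start: "L 0 \<ge> 0"
    using x2_cone traj1 traj2 unfolding is_trajectory_def cone_def LL_def L_def
    by (simp add: norm_minus_commute)
  fix t assume "t \<in> {0..t0}"
  with linear_barrier[OF L_deriv L_start L_slope] show "phi2 t \<in> cone (phi1 t)"
    unfolding cone_def LL_def L_def by (simp add: norm_minus_commute)
qed

end
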